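(* Let $n\ge3$ and let $L^B$ be a blow-up of $L\cong\mathbf{2}^n$ with atoms $q_1,\dots,q_n$ such that $|[q_i]|\ge2$ for every $1\le i\le n$. Then $G(L^B)^{**}=G(L^B)_{SR}$ (same vertex set and same edges).
   Context: Blow-up: for $L\cong\mathbf{2}^n$ with atoms $q_1,\dots,q_n$, replace each $a\in L\setminus\{0,1\}$ by a finite chain $C_a$: $a=a^1\lessdot\cdots\lessdot a^{k_a}$ ($k_a\ge1$), keep $0,1$; elements of one chain are ordered along it, and for $u\in C_a,v\in C_b$ with $a\ne b$ ($C_0=\{0\},C_1=\{1\}$), $u\le v$ iff $a<b$ in $L$. $G(L^B)$ is the zero-divisor graph of $L^B$ (vertices: nonzero elements with a nonzero element meeting them in $0$; adjacency: meet $=0$). For $x\in L^B$, $x^\perp=\{z:x\wedge z=0\}$, $[x]=\{y:y^\perp=x^\perp\}$ (so $[q_i]=C_{q_i}$), classes ordered by $[a]\le[b]$ iff $b^\perp\subseteq a^\perp$, $[a]\wedge[b]=[a\wedge b]$. $G(L^B)^{**}$: vertex set $V(G(L^B))$, distinct $x,y$ adjacent iff $[x]=[y]$, or $[x]\wedge[y]\ne[0]$ with $[x],[y]$ incomparable. In a graph $G$, $u$ is maximally distant from $v$ if $d(v,w)\le d(u,v)$ for all neighbours $w$ of $u$; $u,v$ are mutually maximally distant if each is maximally distant from the other. The boundary $\partial(G)$ is the set of vertices $u$ for which some $v$ is mutually maximally distant with $u$. The strong resolving graph $G_{SR}$ has vertex set $\partial(G)$, distinct $u,v$ adjacent iff they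 are mutually maximally distant in $G$. *)

theory Defs
  imports Main "HOL-Library.Extended_Nat"
begin

text \<open>L = 2^n is modelled as Pow {..<n}, atoms q_i = {i} (i < n).
  The blow-up replaces each a with {} \<noteq> a \<noteq> {..<n} by a chain
  a^1 < ... < a^(k a); elements of L^B are pairs (a, j) meaning a^j.
  0 = ({},1), 1 = ({..<n},1).\<close>

definition blowup_ok :: "nat \<Rightarrow> (nat set \<Rightarrow> nat) \<Rightarrow> bool" where
  "blowup_ok n k \<longleftrightarrow> (\<forall>a. a \<subseteq> {..<n} \<and> a \<noteq> {} \<and> a \<noteq> {..<n} \<longrightarrow> 1 \<le> k a)"

definition LB :: "nat \<Rightarrow> (nat set \<Rightarrow> nat) \<Rightarrow> (nat set \<times> nat) set" where
  "LB n k = {(a, j). a \<subseteq> {..<n} \<and>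
      (if a = {} \<or> a = {..<n} then j = 1 else 1 \<le> j \<and> j \<le> k a)}"

definition leB :: "nat set \<times> nat \<Rightarrow> nat set \<times> nat \<Rightarrow> bool" where
  "leB x y \<longleftrightarrow> (fst x = fst y \<and> snd x \<le> snd y) \<or> fst x \<subset> fst y"

definition botB :: "nat set \<times> nat" where
  "botB = ({}, 1)"

definition meetB :: "nat \<Rightarrow> (nat set \<Rightarrow> nat) \<Rightarrow> nat set \<times> nat \<Rightarrow> nat set \<times> nat \<Rightarrow> nat set \<times> nat" where
  "meetB n k x y = (THE m. m \<in> LB n k \<and> leB m x \<and> leB m y \<and>
      (\<forall>w\<in>LB n k. leB w x \<and> leB w y \<longrightarrow> leB w m))"

definition perpB :: "nat \<Rightarrow> (nat set \<Rightarrow> nat) \<Rightarrow> nat set \<times> nat \<Rightarrow> (nat set \<times> nat) set" where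
  "perpB n k x = {z \<in> LB n k. meetB n k x z = botB}"

definition clsB :: "nat \<Rightarrow> (nat set \<Rightarrow> nat) \<Rightarrow> nat set \<times> nat \<Rightarrow> (nat set \<times> nat) set" where
  "clsB n k x = {y \<in> LB n k. perpB n k y = perpB n k x}"

definition cls_le :: "nat \<Rightarrow> (nat set \<Rightarrow> nat) \<Rightarrow> nat set \<times> nat \<Rightarrow> nat set \<times> nat \<Rightarrow> bool" where
  "cls_le n k a b \<longleftrightarrow> perpB n k b \<subseteq> perpB n k a"

definition ZV :: "nat \<Rightarrow> (nat set \<Rightarrow> nat) \<Rightarrow> (nat set \<times> nat) set" where
  "ZV n k = {x \<in> LB n k. x \<noteq> botB \<and>
      (\<exists>z\<in>LB n k. z \<noteq> botB \<and> meetB n k x z = botB)}"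

definition ZE :: "nat \<Rightarrow> (nat set \<Rightarrow> nat) \<Rightarrow> nat set \<times> nat \<Rightarrow> nat set \<times> nat \<Rightarrow> bool" where
  "ZE n k x y \<longleftrightarrow> x \<in> ZV n k \<and> y \<in> ZV n k \<and> x \<noteq> y \<and> meetB n k x y = botB"

definition SSE :: "nat \<Rightarrow> (nat set \<Rightarrow> nat) \<Rightarrow> nat set \<times> nat \<Rightarrow> nat set \<times> nat \<Rightarrow> bool" where
  "SSE n k x y \<longleftrightarrow> x \<in> ZV n k \<and> y \<in> ZV n k \<and> x \<noteq> y \<and>
     (clsB n k x = clsB n k y \<or>
      (clsB n k (meetB n k x y) \<noteq> clsB n k botB \<and>
       \<not> cls_le n k x y \<and> \<not> cls_le n k y x))"

inductive walk_len :: "'a set \<Rightarrow> ('a \<Rightarrow> 'a \<Rightarrow> bool) \<Rightarrow> 'a \<Rightarrow> 'a \<Rightarrow> nat \<Rightarrow> bool"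
  for V E where
  wl_nil: "u \<in> V \<Longrightarrow> walk_len V E u u 0"
| wl_cons: "u \<in> V \<Longrightarrow> E u w \<Longrightarrow> walk_len V E w v m \<Longrightarrow> walk_len V E u v (Suc m)"

definition gdist :: "'a set \<Rightarrow> ('a \<Rightarrow> 'a \<Rightarrow> bool) \<Rightarrow> 'a \<Rightarrow> 'a \<Rightarrow> enat" where
  "gdist V E u v = (if \<exists>m. walk_len V E u v m
      then enat (LEAST m. walk_len V E u v m) else \<infinity>)"

definition max_distant :: "'a set \<Rightarrow> ('a \<Rightarrow> 'a \<Rightarrow> bool) \<Rightarrow> 'a \<Rightarrow> 'a \<Rightarrow> bool" where
  "max_distant V E u v \<longleftrightarrow>
     (\<forall>w\<in>V. E u w \<longrightarrow> gdist V E v w \<le> gdist V E u v)"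

definition mutually_max_distant :: "'a set \<Rightarrow> ('a \<Rightarrow> 'a \<Rightarrow> bool) \<Rightarrow> 'a \<Rightarrow> 'a \<Rightarrow> bool" where
  "mutually_max_distant V E u v \<longleftrightarrow> max_distant V E u v \<and> max_distant V E v u"

definition boundary :: "'a set \<Rightarrow> ('a \<Rightarrow> 'a \<Rightarrow> bool) \<Rightarrow> 'a set" where
  "boundary V E = {u \<in> V. \<exists>v\<in>V. mutually_max_distant V E u v}"

definition SR_edge :: "'a set \<Rightarrow> ('a \<Rightarrow> 'a \<Rightarrow> bool) \<Rightarrow> 'a \<Rightarrow> 'a \<Rightarrow> bool" where
  "SR_edge V E u v \<longleftrightarrow> u \<in> boundary V E \<and> v \<in> boundary V E \<and> u \<noteq> v \<and>
     mutually_max_distant V E u v"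

end

theory Submission
  imports Defs
begin

text \<open>Everything the graphs see of an element a^j of L^B is its support a: meets intersect
  supports, x^\<perp> and [x] depend only on the support, and [x] \<le> [y] is inclusion of supports.
  In G(L^B) two vertices are adjacent iff their supports are disjoint, so distances are 1
  (disjoint), 3 (overlapping, with union everything) or 2 (otherwise). Hence x is maximally
  distant from y exactly when the supports overlap and supp x is not a proper subset of supp y:
  otherwise the complement of supp x, resp. a second element of the chain of an atom below
  supp y (it exists because |[q_i]| \<ge> 2), is a neighbour of x farther from y than x.
  So x, y are mutually maximally distant iff their supports are equal or overlap
  incomparably, which is adjacency in G(L^B)**, and every vertex has such a partner.\<close>

lemma walk_len_0_iff: "walk_len V E u v 0 \<longleftrightarrow> u \<in> V \<and> u = v"
  by (auto elim: walk_len.cases intro: walk_len.intros)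

lemma walk_len_Suc_iff:
  "walk_len V E u v (Suc m) \<longleftrightarrow> u \<in> V \<and> (\<exists>w. E u w \<and> walk_len V E w v m)"
  by (auto elim: walk_len.cases intro: walk_len.intros)

lemma walk_len_1_iff: "walk_len V E u v 1 \<longleftrightarrow> u \<in> V \<and> v \<in> V \<and> E u v"
  unfolding One_nat_def walk_len_Suc_iff walk_len_0_iff by blast

lemma gdist_eqI:
  assumes "walk_len V E u v d" and "\<And>m. m < d \<Longrightarrow> \<not> walk_len V E u v m"
  shows "gdist V E u v = enat d"
  using assms unfolding gdist_def by (auto intro!: Least_equality simp: not_less[symmetric])

section \<open>The blow-up lattice\<close>

lemma LB_fst_subset: "x \<in> LB n k \<Longrightarrow> fst x \<subseteq> {..<n}"
  by (cases x) (auto simp: LB_def split: if_splits)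

lemma LB_snd_ge_1: "x \<in> LB n k \<Longrightarrow> 1 \<le> snd x"
  by (cases x) (auto simp: LB_def split: if_splits)

lemma LB_fst_empty: "x \<in> LB n k \<Longrightarrow> fst x = {} \<Longrightarrow> x = botB"
  by (cases x) (auto simp: LB_def botB_def split: if_splits)

lemma botB_in_LB: "botB \<in> LB n k"
  by (simp add: botB_def LB_def)

lemma leB_antisym: "leB x y \<Longrightarrow> leB y x \<Longrightarrow> x = y"
  by (cases x; cases y) (auto simp: leB_def)

lemma leB_fst_subset: "leB x y \<Longrightarrow> fst x \<subseteq> fst y"
  by (auto simp: leB_def)

definition is_meetB ::
    "nat \<Rightarrow> (nat set \<Rightarrow> nat) \<Rightarrow> nat set \<times> nat \<Rightarrow> nat set \<times> nat \<Rightarrow> nat set \<times> nat \<Rightarrow> bool"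
  where "is_meetB n k m x y \<longleftrightarrow> m \<in> LB n k \<and> leB m x \<and> leB m y \<and>
      (\<forall>w\<in>LB n k. leB w x \<and> leB w y \<longrightarrow> leB w m)"

lemma meetB_eq_The: "meetB n k x y = (THE m. is_meetB n k m x y)"
  unfolding meetB_def is_meetB_def ..

locale blowup =
  fixes n :: nat and k :: "nat set \<Rightarrow> nat"
  assumes blowup_ok: "blowup_ok n k"
begin

lemma LB_memI: "a \<subseteq> {..<n} \<Longrightarrow> (a, 1) \<in> LB n k"
  using blowup_ok by (auto simp: LB_def blowup_ok_def)

lemma is_meetB_incomparable:
  assumes x: "x \<in> LB n k" and y: "y \<in> LB n k"
    and "\<not> fst x \<subseteq> fst y" and "\<not> fst y \<subseteq> fst x"
  defines "c \<equiv> fst x \<inter> fst y"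
  shows "is_meetB n k (c, if c = {} then 1 else k c) x y"
proof -
  have c_proper: "c \<subset> fst x" "c \<subset> fst y" "c \<noteq> {..<n}"
    using assms LB_fst_subset[OF x] unfolding c_def by auto
  have top_ge: "c \<noteq> {} \<Longrightarrow> 1 \<le> k c"
    using blowup_ok c_proper LB_fst_subset[OF x] unfolding blowup_ok_def by auto
  show ?thesis unfolding is_meetB_def
  proof (intro conjI ballI impI)
    show "(c, if c = {} then 1 else k c) \<in> LB n k"
      using c_proper top_ge LB_fst_subset[OF x] by (auto simp: LB_def)
    show "leB (c, if c = {} then 1 else k c) x" "leB (c, if c = {} then 1 else k c) y"
      using c_proper by (auto simp: leB_def)
  next
    fix w assume w: "w \<in> LB n k" "leB w x \<and> leB w y"
    then have "fst w \<subseteq> c" unfolding c_def using leB_fst_subset by blast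
    moreover have "fst w = c \<Longrightarrow> snd w \<le> (if c = {} then 1 else k c)"
      using w(1) c_proper by (cases w) (auto simp: LB_def)
    ultimately show "leB w (c, if c = {} then 1 else k c)"
      by (cases "fst w = c") (auto simp: leB_def)
  qed
qed

lemma is_meetB_exists:
  assumes x: "x \<in> LB n k" and y: "y \<in> LB n k"
  shows "\<exists>m. is_meetB n k m x y"
proof -
  consider "fst x = fst y" | "fst x \<subset> fst y" | "fst y \<subset> fst x"
    | "\<not> fst x \<subseteq> fst y" "\<not> fst y \<subseteq> fst x" by blast
  then show ?thesis
  proof cases
    case 1
    then have "is_meetB n k (fst x, min (snd x) (snd y)) x y"
      using x y by (cases x; cases y) (auto simp: is_meetB_def LB_def leB_def split: if_splits)
    then show ?thesis ..
  next
    case 2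
    then have "is_meetB n k x x y" using x by (auto simp: is_meetB_def leB_def)
    then show ?thesis ..
  next
    case 3
    then have "is_meetB n k y x y" using y by (auto simp: is_meetB_def leB_def)
    then show ?thesis ..
  next
    case 4
    then show ?thesis using is_meetB_incomparable[OF x y] by blast
  qed
qed

lemma meetB_is_meet:
  assumes "x \<in> LB n k" and "y \<in> LB n k"
  shows "is_meetB n k (meetB n k x y) x y"
proof -
  have "\<exists>!m. is_meetB n k m x y"
    using is_meetB_exists[OF assms] leB_antisym unfolding is_meetB_def by blast
  then show ?thesis unfolding meetB_eq_The by (rule theI')
qed

lemma fst_meetB:
  assumes x: "x \<in> LB n k" and y: "y \<in> LB n k"
  shows "fst (meetB n k x y) = fst x \<inter> fst y"
proof -
  let ?m = "meetB n k x y" and ?c = "(fst x \<inter> fst y, 1::nat)"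
  have m: "is_meetB n k ?m x y" by (rule meetB_is_meet[OF x y])
  have "?c \<in> LB n k" using LB_memI LB_fst_subset[OF x] by blast
  moreover have "leB ?c x" "leB ?c y"
    using LB_snd_ge_1[OF x] LB_snd_ge_1[OF y] by (cases x; cases y; auto simp: leB_def)+
  ultimately have "fst x \<inter> fst y \<subseteq> fst ?m"
    using m leB_fst_subset unfolding is_meetB_def by fastforce
  moreover have "fst ?m \<subseteq> fst x \<inter> fst y"
    using m leB_fst_subset unfolding is_meetB_def by blast
  ultimately show ?thesis by blast
qed

lemma meetB_in_LB: "x \<in> LB n k \<Longrightarrow> y \<in> LB n k \<Longrightarrow> meetB n k x y \<in> LB n k"
  using meetB_is_meet is_meetB_def by blast

lemma meetB_eq_botB_iff:
  assumes "x \<in> LB n k" and "y \<in> LB n k"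
  shows "meetB n k x y = botB \<longleftrightarrow> fst x \<inter> fst y = {}"
  using fst_meetB[OF assms] LB_fst_empty[OF meetB_in_LB[OF assms]] by (auto simp: botB_def)

lemma perpB_eq: "x \<in> LB n k \<Longrightarrow> perpB n k x = {z \<in> LB n k. fst x \<inter> fst z = {}}"
  unfolding perpB_def using meetB_eq_botB_iff by blast

lemma perpB_subset_iff:
  assumes x: "x \<in> LB n k" and y: "y \<in> LB n k"
  shows "perpB n k y \<subseteq> perpB n k x \<longleftrightarrow> fst x \<subseteq> fst y"
proof
  assume perp: "perpB n k y \<subseteq> perpB n k x"
  show "fst x \<subseteq> fst y"
  proof
    fix i assume i: "i \<in> fst x"
    then have "({i}, 1) \<in> LB n k" using LB_memI LB_fst_subset[OF x] by blast
    then have "({i}, 1) \<notin> perpB n k y" using perp perpB_eq[OF x] i by auto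
    then show "i \<in> fst y" using perpB_eq[OF y] \<open>({i}, 1) \<in> LB n k\<close> by auto
  qed
qed (use perpB_eq[OF x] perpB_eq[OF y] in auto)

lemma cls_le_iff: "x \<in> LB n k \<Longrightarrow> y \<in> LB n k \<Longrightarrow> cls_le n k x y \<longleftrightarrow> fst x \<subseteq> fst y"
  unfolding cls_le_def by (rule perpB_subset_iff)

lemma perpB_eq_iff:
  "x \<in> LB n k \<Longrightarrow> y \<in> LB n k \<Longrightarrow> perpB n k x = perpB n k y \<longleftrightarrow> fst x = fst y"
  using perpB_subset_iff by blast

lemma clsB_eq: "x \<in> LB n k \<Longrightarrow> clsB n k x = {y \<in> LB n k. fst y = fst x}"
  unfolding clsB_def using perpB_eq_iff by blast

lemma clsB_eq_iff:
  assumes x: "x \<in> LB n k" and y: "y \<in> LB n k"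
  shows "clsB n k x = clsB n k y \<longleftrightarrow> fst x = fst y"
  using clsB_eq[OF x] clsB_eq[OF y] x y by blast

lemma LB_chain_eq:
  assumes "a \<subseteq> {..<n}" and "a \<noteq> {}" and "a \<noteq> {..<n}"
  shows "{y \<in> LB n k. fst y = a} = (\<lambda>j. (a, j)) ` {1..k a}"
proof (intro set_eqI iffI)
  fix y assume "y \<in> {y \<in> LB n k. fst y = a}"
  then show "y \<in> (\<lambda>j. (a, j)) ` {1..k a}" using assms by (cases y) (auto simp: LB_def)
qed (use assms in \<open>auto simp: LB_def\<close>)

lemma card_clsB_atom:
  assumes "2 \<le> n" and i: "i < n"
  shows "card (clsB n k ({i}, 1)) = k {i}"
proof -
  have "{0, 1} \<subseteq> {..<n}" using assms by auto
  then have "{i} \<noteq> {..<n}" by (metis insert_subset singletonD zero_neq_one)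
  then have "clsB n k ({i}, 1) = (\<lambda>j. ({i}, j)) ` {1..k {i}}"
    using clsB_eq[OF LB_memI] LB_chain_eq[of "{i}"] i by simp
  then show ?thesis by (simp add: card_image inj_on_def)
qed

section \<open>The zero-divisor graph and G(L^B)**\<close>

lemma ZV_iff: "x \<in> ZV n k \<longleftrightarrow> x \<in> LB n k \<and> fst x \<noteq> {} \<and> fst x \<noteq> {..<n}"
proof
  assume h: "x \<in> ZV n k"
  then obtain z where z: "z \<in> LB n k" "z \<noteq> botB" "meetB n k x z = botB"
    and x: "x \<in> LB n k" "x \<noteq> botB" by (auto simp: ZV_def)
  then have "fst x \<inter> fst z = {}" "fst z \<noteq> {}"
    using meetB_eq_botB_iff[OF x(1) z(1)] LB_fst_empty[OF z(1)] by auto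
  then show "x \<in> LB n k \<and> fst x \<noteq> {} \<and> fst x \<noteq> {..<n}"
    using x LB_fst_empty[OF x(1)] LB_fst_subset[OF z(1)] by auto
next
  assume h: "x \<in> LB n k \<and> fst x \<noteq> {} \<and> fst x \<noteq> {..<n}"
  define z where "z = ({..<n} - fst x, 1::nat)"
  have "z \<in> LB n k" "z \<noteq> botB" "meetB n k x z = botB" "x \<noteq> botB"
    using h LB_fst_subset[of x] LB_memI meetB_eq_botB_iff[of x z]
    unfolding z_def botB_def by auto
  then show "x \<in> ZV n k" using h unfolding ZV_def by blast
qed

lemma ZV_imp_LB: "x \<in> ZV n k \<Longrightarrow> x \<in> LB n k"
  using ZV_iff by blast

lemma ZV_fst:
  "x \<in> ZV n k \<Longrightarrow> fst x \<subseteq> {..<n} \<and> fst x \<noteq> {} \<and> fst x \<noteq> {..<n}"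
  using ZV_iff LB_fst_subset by blast

lemma ZV_memI: "a \<subseteq> {..<n} \<Longrightarrow> a \<noteq> {} \<Longrightarrow> a \<noteq> {..<n} \<Longrightarrow> (a, 1) \<in> ZV n k"
  using ZV_iff LB_memI by simp

lemma ZV_compl: "x \<in> ZV n k \<Longrightarrow> ({..<n} - fst x, 1) \<in> ZV n k"
  using ZV_fst[of x] by (intro ZV_memI) auto

lemma ZE_iff: "ZE n k x y \<longleftrightarrow> x \<in> ZV n k \<and> y \<in> ZV n k \<and> fst x \<inter> fst y = {}"
proof -
  have "x \<in> ZV n k \<Longrightarrow> fst x \<inter> fst y = {} \<Longrightarrow> x \<noteq> y" using ZV_iff by auto
  then show ?thesis unfolding ZE_def using meetB_eq_botB_iff ZV_imp_LB by blast
qed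

definition supp_edge :: "nat set \<times> nat \<Rightarrow> nat set \<times> nat \<Rightarrow> bool" where
  "supp_edge x y \<longleftrightarrow> fst x = fst y \<or>
     (fst x \<inter> fst y \<noteq> {} \<and> \<not> fst x \<subseteq> fst y \<and> \<not> fst y \<subseteq> fst x)"

lemma SSE_iff: "SSE n k x y \<longleftrightarrow> x \<in> ZV n k \<and> y \<in> ZV n k \<and> x \<noteq> y \<and> supp_edge x y"
proof -
  have "clsB n k x = clsB n k y \<or>
      (clsB n k (meetB n k x y) \<noteq> clsB n k botB \<and> \<not> cls_le n k x y \<and> \<not> cls_le n k y x)
      \<longleftrightarrow> supp_edge x y" if x: "x \<in> LB n k" and y: "y \<in> LB n k"
    using clsB_eq_iff[OF x y] clsB_eq_iff[OF meetB_in_LB[OF x y] botB_in_LB]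
      fst_meetB[OF x y] cls_le_iff[OF x y] cls_le_iff[OF y x]
    by (auto simp: supp_edge_def botB_def)
  then show ?thesis unfolding SSE_def using ZV_imp_LB by blast
qed

section \<open>Distances in G(L^B)\<close>

definition distB :: "nat set \<times> nat \<Rightarrow> nat set \<times> nat \<Rightarrow> nat" where
  "distB x y = (if x = y then 0 else if fst x \<inter> fst y = {} then 1
     else if fst x \<union> fst y = {..<n} then 3 else 2)"

lemma walk_len_1_ZE_iff: "walk_len (ZV n k) (ZE n k) x y 1 \<longleftrightarrow> ZE n k x y"
  unfolding walk_len_1_iff ZE_iff by blast

lemma walk_len_2_ZE_iff:
  assumes x: "x \<in> ZV n k" and y: "y \<in> ZV n k"
  shows "walk_len (ZV n k) (ZE n k) x y 2 \<longleftrightarrow> fst x \<union> fst y \<noteq> {..<n}"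
proof
  assume "walk_len (ZV n k) (ZE n k) x y 2"
  then obtain w where "ZE n k x w" "ZE n k w y"
    unfolding numeral_2_eq_2 walk_len_Suc_iff walk_len_0_iff by blast
  then show "fst x \<union> fst y \<noteq> {..<n}" using ZV_fst[of w] by (auto simp: ZE_iff)
next
  let ?c = "({..<n} - (fst x \<union> fst y), 1::nat)"
  assume "fst x \<union> fst y \<noteq> {..<n}"
  then have "?c \<in> ZV n k"
    using ZV_fst[OF x] ZV_fst[OF y] by (intro ZV_memI) auto
  moreover have "ZE n k x ?c" "ZE n k ?c y" using \<open>?c \<in> ZV n k\<close> x y by (auto simp: ZE_iff)
  ultimately show "walk_len (ZV n k) (ZE n k) x y 2"
    using x y unfolding numeral_2_eq_2 walk_len_Suc_iff walk_len_0_iff by blast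
qed

lemma walk_len_3_ZE:
  assumes x: "x \<in> ZV n k" and y: "y \<in> ZV n k" and full: "fst x \<union> fst y = {..<n}"
  shows "walk_len (ZV n k) (ZE n k) x y 3"
proof -
  let ?cx = "({..<n} - fst x, 1::nat)" and ?cy = "({..<n} - fst y, 1::nat)"
  have "ZE n k x ?cx" "ZE n k ?cx ?cy" "ZE n k ?cy y"
    using ZV_compl[OF x] ZV_compl[OF y] x y full by (auto simp: ZE_iff)
  then show ?thesis
    using x y ZV_compl[OF x] ZV_compl[OF y]
    unfolding numeral_3_eq_3 walk_len_Suc_iff walk_len_0_iff by blast
qed

lemma gdist_ZE:
  assumes x: "x \<in> ZV n k" and y: "y \<in> ZV n k"
  shows "gdist (ZV n k) (ZE n k) x y = enat (distB x y)"
proof (rule gdist_eqI)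
  have walk_0: "walk_len (ZV n k) (ZE n k) x y 0 \<longleftrightarrow> x = y"
    using x by (simp add: walk_len_0_iff)
  have walk_1: "walk_len (ZV n k) (ZE n k) x y 1 \<longleftrightarrow> fst x \<inter> fst y = {}"
    unfolding walk_len_1_ZE_iff ZE_iff using x y by blast
  note walk_2 = walk_len_2_ZE_iff[OF x y]
  show "walk_len (ZV n k) (ZE n k) x y (distB x y)"
    using walk_0 walk_1 walk_2 walk_len_3_ZE[OF x y] unfolding distB_def by presburger
  fix m assume "m < distB x y"
  then have "m = 0 \<and> x \<noteq> y \<or> m = 1 \<and> fst x \<inter> fst y \<noteq> {} \<or> m = 2 \<and> fst x \<union> fst y = {..<n}"
    unfolding distB_def by (simp split: if_splits; linarith)
  then show "\<not> walk_len (ZV n k) (ZE n k) x y m"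
    using walk_0 walk_1 walk_2 by blast
qed

section \<open>Maximally distant vertices\<close>

lemma max_distant_ZE_if:
  assumes x: "x \<in> ZV n k" and y: "y \<in> ZV n k" and "x \<noteq> y"
    and overlap: "fst x \<inter> fst y \<noteq> {}" and "\<not> fst x \<subset> fst y"
  shows "max_distant (ZV n k) (ZE n k) x y"
  unfolding max_distant_def
proof (intro ballI impI)
  fix w assume w: "w \<in> ZV n k" "ZE n k x w"
  then have xw: "fst x \<inter> fst w = {}" by (simp add: ZE_iff)
  have "2 \<le> distB x y" using \<open>x \<noteq> y\<close> overlap by (auto simp: distB_def)
  moreover have "distB y w \<le> 2"
  proof (cases "fst x = fst y")
    case True
    then show ?thesis using xw by (auto simp: distB_def)
  next
    case False
    then obtain i where "i \<in> fst x" "i \<notin> fst y" using \<open>\<not> fst x \<subset> fst y\<close> by blast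
    then have "fst y \<union> fst w \<noteq> {..<n}" using xw ZV_fst[OF x] by blast
    then show ?thesis by (auto simp: distB_def)
  qed
  ultimately show "gdist (ZV n k) (ZE n k) y w \<le> gdist (ZV n k) (ZE n k) x y"
    using gdist_ZE x y w(1) by simp
qed

lemma not_max_distant_ZE_if_psubset:
  assumes x: "x \<in> ZV n k" and y: "y \<in> ZV n k" and sub: "fst x \<subset> fst y"
  shows "\<not> max_distant (ZV n k) (ZE n k) x y"
proof -
  define w where "w = ({..<n} - fst x, 1::nat)"
  have w: "w \<in> ZV n k" and "ZE n k x w"
    using x ZV_compl[OF x] unfolding w_def by (auto simp: ZE_iff)
  moreover have "distB x y < distB y w"
    using sub ZV_fst[OF x] ZV_fst[OF y] unfolding w_def distB_def by auto
  then have "gdist (ZV n k) (ZE n k) x y < gdist (ZV n k) (ZE n k) y w"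
    by (simp add: gdist_ZE x y w)
  ultimately show ?thesis
    unfolding max_distant_def by (meson not_le)
qed

end

locale blowup_long_atoms = blowup +
  assumes long_atoms: "i < n \<Longrightarrow> 2 \<le> k {i}"
begin

lemma atom_chain_other:
  assumes "i < n" and "{i} \<noteq> {..<n}"
  obtains j' where "({i}, j') \<in> ZV n k" and "j' \<noteq> j"
proof -
  define j' where "j' = (if j = 1 then 2 else 1::nat)"
  have "({i}, j') \<in> ZV n k"
    using assms long_atoms[OF assms(1)] by (auto simp: j'_def ZV_iff LB_def)
  moreover have "j' \<noteq> j" by (simp add: j'_def)
  ultimately show ?thesis by (rule that)
qed

lemma not_max_distant_ZE_if_disjoint:
  assumes x: "x \<in> ZV n k" and y: "y \<in> ZV n k" and disj: "fst x \<inter> fst y = {}"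
  shows "\<not> max_distant (ZV n k) (ZE n k) x y"
proof -
  obtain i where i: "i \<in> fst y" using ZV_fst[OF y] by blast
  have "i < n" using i ZV_fst[OF y] by auto
  moreover have "{i} \<noteq> {..<n}"
  proof
    assume "{i} = {..<n}"
    then show False using i disj ZV_fst[OF x] by auto
  qed
  ultimately obtain j' where w: "({i}, j') \<in> ZV n k" and "j' \<noteq> snd y"
    by (rule atom_chain_other)
  have "ZE n k x ({i}, j')" using x w i disj by (auto simp: ZE_iff)
  moreover have "distB x y < distB y ({i}, j')"
    using disj i \<open>j' \<noteq> snd y\<close> ZV_fst[OF y] by (auto simp: distB_def)
  then have "gdist (ZV n k) (ZE n k) x y < gdist (ZV n k) (ZE n k) y ({i}, j')"
    by (simp add: gdist_ZE x y w)
  ultimately show ?thesis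
    using w unfolding max_distant_def by (meson not_le)
qed

lemma max_distant_ZE_iff:
  assumes "x \<in> ZV n k" and "y \<in> ZV n k" and "x \<noteq> y"
  shows "max_distant (ZV n k) (ZE n k) x y \<longleftrightarrow> fst x \<inter> fst y \<noteq> {} \<and> \<not> fst x \<subset> fst y"
proof
  assume "max_distant (ZV n k) (ZE n k) x y"
  then show "fst x \<inter> fst y \<noteq> {} \<and> \<not> fst x \<subset> fst y"
    using not_max_distant_ZE_if_psubset[OF assms(1,2)]
      not_max_distant_ZE_if_disjoint[OF assms(1,2)] by auto
qed (use max_distant_ZE_if[OF assms] in auto)

lemma mutually_max_distant_ZE_iff:
  assumes "x \<in> ZV n k" and "y \<in> ZV n k" and "x \<noteq> y"
  shows "mutually_max_distant (ZV n k) (ZE n k) x y \<longleftrightarrow> supp_edge x y"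
proof -
  have "y \<noteq> x" and "fst x \<noteq> {}" using assms ZV_fst by auto
  then show ?thesis
    unfolding mutually_max_distant_def supp_edge_def
      max_distant_ZE_iff[OF assms] max_distant_ZE_iff[OF assms(2,1) \<open>y \<noteq> x\<close>]
    by auto
qed

lemma exists_supp_edge:
  assumes x: "x \<in> ZV n k"
  obtains y where "y \<in> ZV n k" and "y \<noteq> x" and "supp_edge x y"
proof -
  have supp: "fst x \<subseteq> {..<n}" "fst x \<noteq> {}" "fst x \<noteq> {..<n}" using ZV_fst[OF x] by auto
  then obtain i where i: "i \<in> fst x" by auto
  show ?thesis
  proof (cases "fst x = {i}")
    case True
    moreover have "i < n" using i supp by auto
    ultimately obtain j' where y: "({i}, j') \<in> ZV n k" and "j' \<noteq> snd x"
      using supp atom_chain_other by metis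
    then have "({i}, j') \<noteq> x" by auto
    moreover have "supp_edge x ({i}, j')" using True by (simp add: supp_edge_def)
    ultimately show ?thesis by (rule that[OF y])
  next
    case False
    then obtain i' where i': "i' \<in> fst x" "i' \<noteq> i" using i by auto
    obtain j where j: "j \<in> {..<n}" "j \<notin> fst x" using supp by auto
    let ?a = "fst x - {i'} \<union> {j}"
    have "i' \<in> {..<n} - ?a" using supp i' j by auto
    then have "?a \<noteq> {..<n}" by blast
    moreover have "?a \<subseteq> {..<n}" using supp j by blast
    ultimately have "(?a, 1) \<in> ZV n k" by (intro ZV_memI) auto
    moreover have "(?a, 1) \<noteq> x" using j by (metis UnI2 fst_conv singletonI)
    moreover have "supp_edge x (?a, 1)"
      unfolding supp_edge_def using i i' j by auto
    ultimately show ?thesis by (rule that)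
  qed
qed

lemma boundary_ZE: "boundary (ZV n k) (ZE n k) = ZV n k"
proof (intro equalityI subsetI)
  fix x assume x: "x \<in> ZV n k"
  obtain y where y: "y \<in> ZV n k" "y \<noteq> x" and "supp_edge x y"
    using exists_supp_edge[OF x] .
  then have "mutually_max_distant (ZV n k) (ZE n k) x y"
    using mutually_max_distant_ZE_iff[OF x y(1)] by simp
  with x y(1) show "x \<in> boundary (ZV n k) (ZE n k)" unfolding boundary_def by blast
next
  show "x \<in> ZV n k" if "x \<in> boundary (ZV n k) (ZE n k)" for x
    using that unfolding boundary_def by blast
qed

lemma SSE_iff_SR_edge: "SSE n k x y \<longleftrightarrow> SR_edge (ZV n k) (ZE n k) x y"
  unfolding SR_edge_def boundary_ZE SSE_iff
  by (metis mutually_max_distant_ZE_iff)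

end

theorem mainTheorem8:
  fixes n :: nat and k :: "nat set \<Rightarrow> nat"
  assumes "n \<ge> 3"
    and "blowup_ok n k"
    and "\<forall>i<n. card (clsB n k ({i}, 1)) \<ge> 2"
  shows "boundary (ZV n k) (ZE n k) = ZV n k \<and>
         (\<forall>x y. SSE n k x y \<longleftrightarrow> SR_edge (ZV n k) (ZE n k) x y)"
proof -
  interpret blowup n k by standard (rule assms(2))
  have long_atoms: "2 \<le> k {i}" if "i < n" for i
  proof -
    have "card (clsB n k ({i}, 1)) = k {i}" using card_clsB_atom assms(1) that by simp
    then show ?thesis using assms(3) that by metis
  qed
  interpret blowup_long_atoms n k by standard (rule long_atoms)
  show ?thesis using boundary_ZE SSE_iff_SR_edge by blast
qed

end
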